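(* Let $T$ be a triangle from a shape-regular family ($h_T\le\varrho r_T$), $\Gamma_{h,T}$ an open line segment with endpoints on $\partial T$ dividing $T$ into nonempty open parts $T_h^\pm$, and $\mu^\pm>0$. There is a constant $C>0$ independent of $h_T$ and of the location of $\Gamma_{h,T}$ such that $$\|\nabla\mathbf{v}_h\|_{L^2(\partial T)}\le Ch_T^{-1/2}\|\nabla\mathbf{v}_h\|_{L^2(T)}\qquad\forall(\mathbf{v}_h,q_h)\in\mathbf{V}M_h^{IFE}(T).$$
   Context: $\mathbf{n}_h$ is the unit normal of $\Gamma_{h,T}$ pointing into $T_h^+$; $\sigma(\mu,\mathbf{v},q)=2\mu\boldsymbol{\epsilon}(\mathbf{v})-q\mathbb{I}$, $\boldsymbol{\epsilon}(\mathbf{v})=\frac12(\nabla\mathbf{v}+(\nabla\mathbf{v})^T)$. $\mathbf{V}M_h^{IFE}(T)$ is the set of pairs $(\mathbf{v},q)$ equal to $(\mathbf{v}^\pm,q^\pm)$ on $T_h^\pm$, where $\mathbf{v}^\pm\in P_1(T)^2$, $q^\pm\in P_0(T)$ satisfy $\sigma(\mu^+,\mathbf{v}^+,q^+)\mathbf{n}_h=\sigma(\mu^-,\mathbf{v}^-,q^-)\mathbf{n}_h$, $\mathbf{v}^+=\mathbf{v}^-$ on $\Gamma_{h,T}$, $\nabla\cdot\mathbf{v}^+=\nabla\cdot\mathbf{v}^-$. On $\partial T$, $\nabla\mathbf{v}_h$ is the trace of the piecewise constant gradient. *)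

theory Defs
  imports "HOL-Analysis.Analysis"
begin

definition tri :: "real^2 \<Rightarrow> real^2 \<Rightarrow> real^2 \<Rightarrow> (real^2) set" where
  "tri a b c = interior (convex hull {a, b, c})"

definition inradius :: "(real^2) set \<Rightarrow> real" where
  "inradius S = Sup {r. \<exists>x. ball x r \<subseteq> S}"

(* the two subelements T_h^+ and T_h^- cut off by the line through e1 with unit normal n
   (n points into T_h^+) *)
definition subplus :: "(real^2) set \<Rightarrow> real^2 \<Rightarrow> real^2 \<Rightarrow> (real^2) set" where
  "subplus T e1 n = {x \<in> T. n \<bullet> (x - e1) > 0}"

definition subminus :: "(real^2) set \<Rightarrow> real^2 \<Rightarrow> real^2 \<Rightarrow> (real^2) set" where
  "subminus T e1 n = {x \<in> T. n \<bullet> (x - e1) < 0}"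

(* epsilon(v) for v x = G *v x + b, i.e. grad v = G *)
definition strain :: "real^2^2 \<Rightarrow> real^2^2" where
  "strain G = (1/2) *\<^sub>R (G + transpose G)"

definition stress :: "real \<Rightarrow> real^2^2 \<Rightarrow> real \<Rightarrow> real^2^2" where
  "stress \<mu> G q = (2 * \<mu>) *\<^sub>R strain G - q *\<^sub>R mat 1"

(* (v,q) in VM_h^IFE(T): v^+ x = Ap *v x + bp, q^+ = qp, v^- x = Am *v x + bm, q^- = qm;
   interface Gamma = open segment e1 e2 with unit normal n *)
definition ife :: "real \<Rightarrow> real \<Rightarrow> real^2 \<Rightarrow> real^2 \<Rightarrow> real^2 \<Rightarrow>
    real^2^2 \<Rightarrow> real^2 \<Rightarrow> real \<Rightarrow> real^2^2 \<Rightarrow> real^2 \<Rightarrow> real \<Rightarrow> bool" where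
  "ife \<mu>p \<mu>m e1 e2 n Ap bp qp Am bm qm \<longleftrightarrow>
     stress \<mu>p Ap qp *v n = stress \<mu>m Am qm *v n \<and>
     (\<forall>x\<in>open_segment e1 e2. Ap *v x + bp = Am *v x + bm) \<and>
     trace Ap = trace Am"

definition grad_in :: "(real^2) set \<Rightarrow> real^2^2 \<Rightarrow> real^2^2 \<Rightarrow> real^2 \<Rightarrow> real^2^2" where
  "grad_in Tp Ap Am x = (if x \<in> Tp then Ap else Am)"

(* trace of the piecewise constant gradient on the boundary *)
definition grad_bd :: "(real^2) set \<Rightarrow> real^2^2 \<Rightarrow> real^2^2 \<Rightarrow> real^2 \<Rightarrow> real^2^2" where
  "grad_bd Tp Ap Am x = (if x \<in> closure Tp then Ap else Am)"

definition edge_integral :: "(real^2 \<Rightarrow> real) \<Rightarrow> real^2 \<Rightarrow> real^2 \<Rightarrow> real" where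
  "edge_integral f a b = integral {0..1} (\<lambda>t. f (a + t *\<^sub>R (b - a))) * norm (b - a)"

definition bd_integral :: "(real^2 \<Rightarrow> real) \<Rightarrow> real^2 \<Rightarrow> real^2 \<Rightarrow> real^2 \<Rightarrow> real" where
  "bd_integral f a b c = edge_integral f a b + edge_integral f b c + edge_integral f c a"

end

theory Submission
  imports Defs
begin

(* The jump D = A+ - A- of the piecewise constant gradient annihilates the direction of the
   interface (continuity of v) and is traceless (equal divergences), so in two dimensions it is
   the rank-one matrix alpha t n^T, t the unit tangent.  The tangential component of the traction
   condition gives mu+ alpha = (mu- - mu+) t . (A- + A-^T) n, hence |A+| and |A-| are comparable
   with a factor depending only on mu+ and mu-.  On the boundary |grad v|^2 <= max |A+-|^2, and
   the three edges have length at most h_T; inside, shape regularity yields a disc of radius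
   h_T / (2 rho) in T, on which |grad v|^2 >= min |A+-|^2.  Comparing the two gives
   h_T ||grad v||^2_{L^2(dT)} <= C^2 ||grad v||^2_{L^2(T)}. *)

definition outer_product :: "'a::comm_semiring_1^'m \<Rightarrow> 'a^'n \<Rightarrow> 'a^'n^'m" where
  "outer_product u v = (\<chi> i j. u$i * v$j)"

lemma outer_product_mult_vec: "outer_product u v *v x = (v \<bullet> x) *\<^sub>R (u :: real^'m)"
  by (simp add: outer_product_def matrix_vector_mult_def inner_vec_def vec_eq_iff
      sum_distrib_left mult_ac)

lemma trace_outer_product: "trace (outer_product u v) = (u :: real^'n) \<bullet> v"
  by (simp add: outer_product_def trace_def inner_vec_def)

lemma transpose_outer_product: "transpose (outer_product u v) = outer_product v u"
  by (simp add: outer_product_def transpose_def vec_eq_iff mult.commute)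

lemma outer_product_scaleR_left: "outer_product (c *\<^sub>R u) v = c *\<^sub>R outer_product (u :: real^'m) (v :: real^'n)"
  by (simp add: outer_product_def vec_eq_iff mult.assoc)

lemma norm_outer_product: "norm (outer_product u v) = norm (u :: real^'m) * norm (v :: real^'n)"
proof -
  have "norm (outer_product u v $ i) = \<bar>u$i\<bar> * norm v" for i
    by (simp add: outer_product_def norm_vec_def L2_set_right_distrib abs_mult flip: L2_set_left_distrib)
  then show ?thesis
    by (simp add: norm_vec_def[of "outer_product u v"] norm_vec_def[of u] L2_set_left_distrib)
qed

lemma norm_matrix_vector_mult_le: "norm (A *v x) \<le> norm (A :: real^'n^'m) * norm x"
proof -
  have "norm (A *v x) = L2_set (\<lambda>i. \<bar>A$i \<bullet> x\<bar>) UNIV"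
    by (simp add: norm_vec_def matrix_vector_mul_component)
  also have "\<dots> \<le> L2_set (\<lambda>i. norm (A$i) * norm x) UNIV"
    by (intro L2_set_mono Cauchy_Schwarz_ineq2) auto
  also have "\<dots> = norm A * norm x"
    by (simp add: norm_vec_def[of A] L2_set_left_distrib)
  finally show ?thesis .
qed

lemma norm_transpose: "norm (transpose A) = norm (A :: real^'n^'m)"
proof -
  have sq: "(norm B)\<^sup>2 = (\<Sum>i\<in>UNIV. \<Sum>j\<in>UNIV. (B$i$j)\<^sup>2)" for B :: "real^'k^'l"
    by (simp add: norm_vec_def L2_set_def sum_nonneg)
  have "(norm (transpose A))\<^sup>2 = (norm A)\<^sup>2"
    unfolding sq by (simp add: transpose_def) (rule sum.swap)
  then show ?thesis by simp
qed

definition perp :: "real^2 \<Rightarrow> real^2" where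
  "perp v = vector [- v$2, v$1]"

lemma inner_vec2: "(u :: real^2) \<bullet> v = u$1 * v$1 + u$2 * v$2"
  by (simp add: inner_vec_def sum_2)

lemma power2_norm_vec2: "(norm (v :: real^2))\<^sup>2 = (v$1)\<^sup>2 + (v$2)\<^sup>2"
  by (simp add: norm_vec_def L2_set_def sum_2)

lemma inner_perp_self: "perp v \<bullet> v = 0"
  by (simp add: perp_def inner_vec2)

lemma norm_perp: "norm (perp v) = norm v"
proof -
  have "(norm (perp v))\<^sup>2 = (norm v)\<^sup>2" by (simp add: power2_norm_vec2 perp_def add.commute)
  then show ?thesis by simp
qed

lemma orthonormal_expansion_perp:
  assumes "norm n = 1"
  shows "x = (perp n \<bullet> x) *\<^sub>R perp n + (n \<bullet> x) *\<^sub>R n"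
proof -
  have "(n$1)\<^sup>2 + (n$2)\<^sup>2 = 1" using assms power2_norm_vec2[of n] by simp
  then show ?thesis
    unfolding vec_eq_iff forall_2 by (simp add: perp_def inner_vec2) algebra
qed

lemma matrix_vector_mult_perp_eq_0:
  assumes "norm n = 1" "n \<bullet> t = 0" "t \<noteq> 0" "D *v t = 0"
  shows "D *v perp n = 0"
proof -
  have t: "t = (perp n \<bullet> t) *\<^sub>R perp n"
    using orthonormal_expansion_perp[OF assms(1), of t] assms(2) by simp
  with assms(3) have "perp n \<bullet> t \<noteq> 0" by auto
  moreover have "(perp n \<bullet> t) *\<^sub>R (D *v perp n) = 0"
    using assms(4) t by (metis matrix_vector_mult_scaleR)
  ultimately show ?thesis by simp
qed

lemma traceless_matrix_eq_outer_product_perp: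
  fixes D :: "real^2^2"
  assumes "norm n = 1" "D *v perp n = 0" "trace D = 0"
  shows "D = (perp n \<bullet> (D *v n)) *\<^sub>R outer_product (perp n) n"
proof -
  have "D *v x = outer_product (D *v n) n *v x" for x
  proof -
    have "D *v x = D *v ((perp n \<bullet> x) *\<^sub>R perp n + (n \<bullet> x) *\<^sub>R n)"
      using orthonormal_expansion_perp[OF assms(1)] by metis
    then show ?thesis
      using assms(2) by (simp add: matrix_vector_right_distrib matrix_vector_mult_scaleR
          outer_product_mult_vec)
  qed
  then have D: "D = outer_product (D *v n) n" using matrix_eq by blast
  then have "(D *v n) \<bullet> n = 0" using assms(3) trace_outer_product by metis
  then have "D *v n = (perp n \<bullet> (D *v n)) *\<^sub>R perp n"
    using orthonormal_expansion_perp[OF assms(1), of "D *v n"] by (simp add: inner_commute)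
  then show ?thesis using D by (metis outer_product_scaleR_left)
qed

lemma stress_mult_vec: "stress \<mu> G q *v n = \<mu> *\<^sub>R ((G + transpose G) *v n) - q *\<^sub>R n"
  by (simp add: stress_def strain_def matrix_vector_mult_diff_rdistrib
      flip: scaleR_matrix_vector_assoc)

lemma matrix_diff_mult_segment_direction_eq_0:
  fixes A B :: "real^'n^'m"
  assumes agree: "\<forall>x\<in>open_segment e1 e2. A *v x + b = B *v x + c" and "e1 \<noteq> e2"
  shows "(A - B) *v (e2 - e1) = 0"
proof -
  define x1 where "x1 = (1/2) *\<^sub>R e1 + (1/2) *\<^sub>R e2"
  define x2 where "x2 = (3/4) *\<^sub>R e1 + (1/4) *\<^sub>R e2"
  have "x1 \<in> open_segment e1 e2" "x2 \<in> open_segment e1 e2"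
    unfolding x1_def x2_def in_segment using \<open>e1 \<noteq> e2\<close>
    by (intro conjI exI[of _ "1/2"] exI[of _ "1/4"]; simp)+
  then have "(A - B) *v x1 = c - b" "(A - B) *v x2 = c - b"
    using agree by (auto simp: algebra_simps)
  then have "(A - B) *v (x1 - x2) = 0" by (simp add: matrix_vector_mult_diff_distrib)
  moreover have "x1 - x2 = (1/4) *\<^sub>R (e2 - e1)"
    unfolding x1_def x2_def by (simp add: vec_eq_iff field_simps)
  ultimately show ?thesis by (simp add: matrix_vector_mult_scaleR)
qed

lemma ife_gradient_jump_eq_outer_product:
  assumes ife: "ife \<mu>p \<mu>m e1 e2 n Ap bp qp Am bm qm"
    and "e1 \<noteq> e2" "norm n = 1" "n \<bullet> (e2 - e1) = 0"
  shows "Ap - Am = (perp n \<bullet> ((Ap - Am) *v n)) *\<^sub>R outer_product (perp n) n"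
proof (rule traceless_matrix_eq_outer_product_perp)
  have "(Ap - Am) *v (e2 - e1) = 0"
    using ife \<open>e1 \<noteq> e2\<close> unfolding ife_def by (blast intro: matrix_diff_mult_segment_direction_eq_0)
  then show "(Ap - Am) *v perp n = 0"
    using assms(2-4) by (intro matrix_vector_mult_perp_eq_0) auto
  show "trace (Ap - Am) = 0"
    using ife unfolding ife_def by (simp add: trace_def sum_subtractf)
qed fact

lemma ife_gradient_jump_coefficient:
  assumes ife: "ife \<mu>p \<mu>m e1 e2 n Ap bp qp Am bm qm"
    and "e1 \<noteq> e2" "norm n = 1" "n \<bullet> (e2 - e1) = 0"
  shows "\<mu>p * (perp n \<bullet> ((Ap - Am) *v n)) = (\<mu>m - \<mu>p) * (perp n \<bullet> ((Am + transpose Am) *v n))"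
proof -
  define \<tau> where "\<tau> = perp n"
  define \<alpha> where "\<alpha> = \<tau> \<bullet> ((Ap - Am) *v n)"
  define S where "S = Am + transpose Am"
  have D: "Ap - Am = \<alpha> *\<^sub>R outer_product \<tau> n"
    unfolding \<alpha>_def \<tau>_def by (rule ife_gradient_jump_eq_outer_product[OF assms])
  have \<tau>n: "\<tau> \<bullet> n = 0" "\<tau> \<bullet> \<tau> = 1" "n \<bullet> n = 1"
    unfolding \<tau>_def using assms(3) by (auto simp: inner_perp_self norm_perp simp flip: norm_eq_1)
  have tangential: "\<tau> \<bullet> (stress \<mu> G q *v n) = \<mu> * (\<tau> \<bullet> ((G + transpose G) *v n))" for \<mu> G q
    using \<tau>n by (simp add: stress_mult_vec inner_diff_right)
  have "Ap + transpose Ap = S + (Ap - Am) + transpose (Ap - Am)"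
    unfolding S_def by (simp add: transpose_def vec_eq_iff)
  then have sym: "(Ap + transpose Ap) *v n = S *v n + \<alpha> *\<^sub>R \<tau>"
    using D \<tau>n by (simp add: transpose_scalar transpose_outer_product outer_product_mult_vec
        matrix_vector_mult_add_rdistrib inner_commute flip: scaleR_matrix_vector_assoc)
  have "stress \<mu>p Ap qp *v n = stress \<mu>m Am qm *v n"
    using ife unfolding ife_def by blast
  then have "\<mu>p * (\<tau> \<bullet> ((Ap + transpose Ap) *v n)) = \<mu>m * (\<tau> \<bullet> (S *v n))"
    unfolding S_def by (metis tangential)
  then have "\<mu>p * (\<tau> \<bullet> (S *v n) + \<alpha>) = \<mu>m * (\<tau> \<bullet> (S *v n))"
    using sym \<tau>n by (simp add: inner_add_right)
  then show ?thesis
    unfolding \<alpha>_def \<tau>_def S_def by (simp add: algebra_simps)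
qed

lemma norm_ife_gradient_jump_le:
  assumes ife: "ife \<mu>p \<mu>m e1 e2 n Ap bp qp Am bm qm"
    and e: "e1 \<noteq> e2" "norm n = 1" "n \<bullet> (e2 - e1) = 0" and "\<mu>p > 0"
  shows "norm (Ap - Am) \<le> 2 * \<bar>\<mu>m - \<mu>p\<bar> / \<mu>p * norm Am"
proof -
  define \<alpha> where "\<alpha> = perp n \<bullet> ((Ap - Am) *v n)"
  define \<beta> where "\<beta> = perp n \<bullet> ((Am + transpose Am) *v n)"
  have "Ap - Am = \<alpha> *\<^sub>R outer_product (perp n) n"
    unfolding \<alpha>_def by (rule ife_gradient_jump_eq_outer_product[OF ife e])
  then have "norm (Ap - Am) = \<bar>\<alpha>\<bar>"
    using e(2) by (simp add: norm_outer_product norm_perp)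
  moreover have "\<alpha> = (\<mu>m - \<mu>p) / \<mu>p * \<beta>"
    using ife_gradient_jump_coefficient[OF ife e] \<open>\<mu>p > 0\<close>
    unfolding \<alpha>_def \<beta>_def by (simp add: field_simps)
  ultimately have "norm (Ap - Am) = \<bar>\<mu>m - \<mu>p\<bar> / \<mu>p * \<bar>\<beta>\<bar>"
    using \<open>\<mu>p > 0\<close> by (simp add: abs_mult)
  also have "\<dots> \<le> \<bar>\<mu>m - \<mu>p\<bar> / \<mu>p * (2 * norm Am)"
  proof (rule mult_left_mono)
    have "\<bar>\<beta>\<bar> \<le> norm (perp n) * norm ((Am + transpose Am) *v n)"
      unfolding \<beta>_def by (rule Cauchy_Schwarz_ineq2)
    also have "\<dots> \<le> norm (Am + transpose Am)"
      using norm_matrix_vector_mult_le[of "Am + transpose Am" n] e(2) by (simp add: norm_perp)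
    also have "\<dots> \<le> 2 * norm Am"
      using norm_triangle_ineq[of Am "transpose Am"] by (simp add: norm_transpose)
    finally show "\<bar>\<beta>\<bar> \<le> 2 * norm Am" .
  qed (use \<open>\<mu>p > 0\<close> in simp)
  finally show ?thesis by (simp add: mult_ac)
qed

definition jump_factor :: "real \<Rightarrow> real \<Rightarrow> real" where
  "jump_factor \<mu> \<mu>' = 1 + 2 * \<bar>\<mu>' - \<mu>\<bar> / \<mu>"

lemma ife_swap:
  "ife \<mu>p \<mu>m e1 e2 n Ap bp qp Am bm qm \<Longrightarrow> ife \<mu>m \<mu>p e1 e2 n Am bm qm Ap bp qp"
  unfolding ife_def by auto

lemma norm_ife_gradient_le:
  assumes "ife \<mu>p \<mu>m e1 e2 n Ap bp qp Am bm qm"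
    and "e1 \<noteq> e2" "norm n = 1" "n \<bullet> (e2 - e1) = 0" "\<mu>p > 0"
  shows "norm Ap \<le> jump_factor \<mu>p \<mu>m * norm Am"
  using norm_ife_gradient_jump_le[OF assms] norm_triangle_ineq[of Am "Ap - Am"]
  by (simp add: jump_factor_def algebra_simps)

lemma two_mult_radius_le_diameter:
  fixes T :: "'a::euclidean_space set"
  assumes "bounded T" "ball x r \<subseteq> T" "0 < r"
  shows "2 * r \<le> diameter T"
  using diameter_subset[OF assms(2,1)] assms(3) by simp

lemma bdd_above_inscribed_radii:
  fixes T :: "'a::euclidean_space set"
  assumes "bounded T"
  shows "bdd_above {r. \<exists>x. ball x r \<subseteq> T}"
proof (rule bdd_aboveI)
  fix s assume "s \<in> {r. \<exists>x. ball x r \<subseteq> T}"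
  then obtain x where "ball x s \<subseteq> T" by blast
  then show "s \<le> diameter T"
    using two_mult_radius_le_diameter[OF assms] diameter_ge_0[OF assms]
    by (cases "0 < s") fastforce+
qed

lemma ball_subset_of_less_inradius:
  assumes "bounded T" "r < inradius T"
  obtains x where "ball x r \<subseteq> T"
proof -
  have "0 \<in> {r. \<exists>x. ball x r \<subseteq> T}" by simp
  then obtain s x where "ball x s \<subseteq> T" "r < s"
    using assms(2) less_cSup_iff[OF _ bdd_above_inscribed_radii[OF assms(1)], of r]
    unfolding inradius_def by blast
  then show ?thesis
    using that by (meson less_imp_le order_trans subset_ball)
qed

lemma inradius_pos:
  assumes "open T" "bounded T" "T \<noteq> {}"
  shows "0 < inradius T"
proof -
  obtain x r where "0 < r" "ball x r \<subseteq> T"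
    using assms(1,3) by (metis all_not_in_conv openE)
  then show ?thesis
    unfolding inradius_def
    using cSup_upper[OF _ bdd_above_inscribed_radii[OF assms(2)], of r] by fastforce
qed

lemma shape_regular_inscribed_ball:
  assumes "open T" "bounded T" "T \<noteq> {}" "diameter T \<le> \<rho> * inradius T"
  shows "0 < \<rho>" and "0 < diameter T" and "\<exists>x. ball x (diameter T / (2 * \<rho>)) \<subseteq> T"
proof -
  obtain x r where "0 < r" "ball x r \<subseteq> T"
    using assms(1,3) by (metis all_not_in_conv openE)
  then show h: "0 < diameter T"
    using two_mult_radius_le_diameter[OF assms(2)] by fastforce
  with assms(4) inradius_pos[OF assms(1-3)] show "0 < \<rho>"
    by (smt (verit) mult_nonpos_nonneg)
  with h assms(4) have "diameter T / (2 * \<rho>) < inradius T"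
    by (simp add: field_simps)
  then show "\<exists>x. ball x (diameter T / (2 * \<rho>)) \<subseteq> T"
    using ball_subset_of_less_inradius[OF assms(2)] by metis
qed

lemma open_tri: "open (tri a b c)"
  by (simp add: tri_def)

lemma bounded_tri: "bounded (tri a b c)"
  unfolding tri_def
  by (rule bounded_subset[OF _ interior_subset]) (simp add: finite_imp_bounded_convex_hull)

lemma norm_vertex_diff_le_diameter_tri:
  assumes "tri a b c \<noteq> {}" "u \<in> {a, b, c}" "v \<in> {a, b, c}"
  shows "norm (v - u) \<le> diameter (tri a b c)"
proof -
  let ?H = "convex hull {a, b, c}"
  have "compact ?H" by (simp add: finite_imp_compact_convex_hull)
  moreover have "closure (tri a b c) = closure ?H"
    using assms(1) unfolding tri_def by (simp add: convex_closure_interior)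
  ultimately have "diameter (tri a b c) = diameter ?H"
    by (metis bounded_tri closure_closed compact_imp_closed diameter_closure)
  moreover have "u \<in> ?H" "v \<in> ?H" using assms(2,3) by (auto intro: hull_inc)
  ultimately show ?thesis
    using diameter_bounded_bound[OF compact_imp_bounded[OF \<open>compact ?H\<close>], of v u]
    by (simp add: dist_norm)
qed

lemma edge_integral_le:
  assumes "\<forall>x. 0 \<le> f x \<and> f x \<le> M"
  shows "edge_integral f u v \<le> M * norm (v - u)"
proof -
  have "0 \<le> M" using assms by (meson order_trans)
  have "integral {0..1} (\<lambda>t. f (u + t *\<^sub>R (v - u))) \<le> M"
  proof (cases "(\<lambda>t. f (u + t *\<^sub>R (v - u))) integrable_on {0..1}")
    case True
    then have "integral {0..1} (\<lambda>t. f (u + t *\<^sub>R (v - u))) \<le> integral {0..1} (\<lambda>t::real. M)"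
      using assms by (intro integral_le) auto
    then show ?thesis by simp
  next
    case False
    then show ?thesis using \<open>0 \<le> M\<close> by (simp add: not_integrable_integral)
  qed
  then show ?thesis unfolding edge_integral_def by (intro mult_right_mono) auto
qed

lemma bd_integral_le_diameter:
  assumes "\<forall>x. 0 \<le> g x \<and> g x \<le> M" "tri a b c \<noteq> {}"
  shows "bd_integral g a b c \<le> 3 * M * diameter (tri a b c)"
proof -
  have "0 \<le> M" using assms(1) by (meson order_trans)
  have edge: "edge_integral g u v \<le> M * diameter (tri a b c)"
    if "u \<in> {a, b, c}" "v \<in> {a, b, c}" for u v
    using edge_integral_le[OF assms(1), of u v] norm_vertex_diff_le_diameter_tri[OF assms(2) that]
      \<open>0 \<le> M\<close> by (meson mult_left_mono order_trans)
  have "edge_integral g a b \<le> M * diameter (tri a b c)"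
    "edge_integral g b c \<le> M * diameter (tri a b c)"
    "edge_integral g c a \<le> M * diameter (tri a b c)"
    by (rule edge; simp)+
  then show ?thesis unfolding bd_integral_def by linarith
qed

lemma integral_ge_disc_area:
  fixes f :: "real^2 \<Rightarrow> real"
  assumes "S \<in> lmeasurable" "f integrable_on S" "\<forall>x\<in>S. m \<le> f x" "0 \<le> m" "ball x r \<subseteq> S" "0 \<le> r"
  shows "m * (pi * r\<^sup>2) \<le> integral S f"
proof -
  have "integral (ball x r) (\<lambda>_. m) = m * measure lborel (ball x r)"
    using lmeasure_integral[of "ball x r"] integral_mult_right[where c=m and S="ball x r" and f="\<lambda>_. 1"]
    by simp
  also have "\<dots> = m * (pi * r\<^sup>2)" using circle_area[OF assms(6)] by simp
  finally have "m * (pi * r\<^sup>2) = integral (ball x r) (\<lambda>_. m)" ..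
  also have "\<dots> \<le> integral S (\<lambda>_. m)"
    using assms by (intro integral_subset_le integrable_on_const) auto
  also have "\<dots> \<le> integral S f"
    using assms by (intro integral_le integrable_on_const) auto
  finally show ?thesis .
qed

lemma integrable_on_two_valued:
  fixes \<alpha> \<beta> :: real
  assumes "S \<in> lmeasurable" "P \<in> sets lebesgue"
  shows "(\<lambda>x. if x \<in> P then \<alpha> else \<beta>) integrable_on S"
proof -
  have "P \<inter> S \<in> lmeasurable"
    using fmeasurable_Int_fmeasurable[OF assms] by (simp add: Int_commute)
  then have "(\<lambda>x. if x \<in> P then \<alpha> - \<beta> else 0) integrable_on S"
    by (simp add: integrable_restrict_Int integrable_on_const)
  then have "(\<lambda>x. \<beta> + (if x \<in> P then \<alpha> - \<beta> else 0)) integrable_on S"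
    by (intro integrable_add integrable_on_const assms(1))
  moreover have "(\<lambda>x. \<beta> + (if x \<in> P then \<alpha> - \<beta> else 0)) = (\<lambda>x. if x \<in> P then \<alpha> else \<beta>)"
    by auto
  ultimately show ?thesis by simp
qed

lemma sqrt_le_powr_of_mult_le:
  assumes "0 < h" "0 \<le> K" "B * h \<le> K\<^sup>2 * I"
  shows "sqrt B \<le> K * h powr (-1/2) * sqrt I"
proof -
  have "sqrt B \<le> sqrt (K\<^sup>2 * I / h)"
    using assms by (simp add: pos_le_divide_eq)
  also have "\<dots> = K * h powr (-1/2) * sqrt I"
    using assms by (simp add: real_sqrt_mult real_sqrt_divide powr_minus_divide powr_half_sqrt)
  finally show ?thesis .
qed

lemma max_power2_le_mult_min_power2:
  fixes x y L :: real
  assumes "0 \<le> x" "0 \<le> y" "x \<le> L * y" "y \<le> L * x"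
  shows "max (x\<^sup>2) (y\<^sup>2) \<le> L\<^sup>2 * min (x\<^sup>2) (y\<^sup>2)"
proof (cases "x \<le> y")
  case True
  then have "y\<^sup>2 \<le> (L * x)\<^sup>2" using assms by (intro power_mono) auto
  then show ?thesis using True assms by (simp add: power_mult_distrib power_mono)
next
  case False
  then have "x\<^sup>2 \<le> (L * y)\<^sup>2" using assms by (intro power_mono) auto
  then show ?thesis using False assms by (simp add: power_mult_distrib power_mono)
qed

lemma trace_inverse_estimate_tri:
  assumes T: "tri a b c \<noteq> {}" and shape: "diameter (tri a b c) \<le> \<rho> * inradius (tri a b c)"
    and g: "\<forall>x. 0 \<le> g x \<and> g x \<le> M"
    and f: "f integrable_on tri a b c" "\<forall>x\<in>tri a b c. m \<le> f x" "0 \<le> m"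
    and M: "M \<le> L\<^sup>2 * m" and "0 \<le> L" and K: "2 * \<rho> * L \<le> K"
  shows "sqrt (bd_integral g a b c) \<le> K * diameter (tri a b c) powr (-1/2) * sqrt (integral (tri a b c) f)"
proof -
  define h where "h = diameter (tri a b c)"
  define r where "r = h / (2 * \<rho>)"
  have \<rho>: "0 < \<rho>" and h: "0 < h" and "\<exists>x. ball x r \<subseteq> tri a b c"
    using shape_regular_inscribed_ball[OF open_tri bounded_tri T shape] unfolding h_def r_def by auto
  then obtain x where "ball x r \<subseteq> tri a b c" by blast
  then have I: "m * (pi * r\<^sup>2) \<le> integral (tri a b c) f"
    using integral_ge_disc_area[OF lmeasurable_open[OF bounded_tri open_tri] f] \<rho> h
    unfolding r_def by simp
  have "0 \<le> L\<^sup>2 * m" using \<open>0 \<le> m\<close> by simp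
  have "bd_integral g a b c * h \<le> 3 * M * h * h"
    using bd_integral_le_diameter[OF g T] h unfolding h_def by (simp add: mult_right_mono)
  also have "\<dots> \<le> 3 * (L\<^sup>2 * m) * h * h"
    using M h by (simp add: mult_right_mono)
  also have "\<dots> \<le> pi * (L\<^sup>2 * m) * h * h"
    using pi_gt3 \<open>0 \<le> L\<^sup>2 * m\<close> h by (intro mult_right_mono) auto
  also have "\<dots> = (2 * \<rho> * L)\<^sup>2 * (m * (pi * r\<^sup>2))"
    unfolding r_def using \<rho> by (simp add: field_simps power2_eq_square)
  also have "\<dots> \<le> K\<^sup>2 * integral (tri a b c) f"
  proof (rule mult_mono[OF _ I])
    show "(2 * \<rho> * L)\<^sup>2 \<le> K\<^sup>2" using K \<rho> \<open>0 \<le> L\<close> by (intro power_mono) auto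
  qed (use \<open>0 \<le> m\<close> in auto)
  finally have "bd_integral g a b c * h \<le> K\<^sup>2 * integral (tri a b c) f" .
  moreover have "0 \<le> K"
    using K \<rho> \<open>0 \<le> L\<close> by (meson less_imp_le mult_nonneg_nonneg order_trans zero_le_numeral)
  ultimately show ?thesis
    using sqrt_le_powr_of_mult_le[OF h] unfolding h_def by blast
qed

lemma ife_trace_inverse_estimate:
  assumes \<mu>: "0 < \<mu>p" "0 < \<mu>m" and "Tp \<in> sets lebesgue"
    and T: "tri a b c \<noteq> {}" and shape: "diameter (tri a b c) \<le> \<rho> * inradius (tri a b c)"
    and e: "e1 \<noteq> e2" "norm n = 1" "n \<bullet> (e2 - e1) = 0"
    and ife: "ife \<mu>p \<mu>m e1 e2 n Ap bp qp Am bm qm"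
    and K: "2 * \<rho> * max (jump_factor \<mu>p \<mu>m) (jump_factor \<mu>m \<mu>p) \<le> K"
  shows "sqrt (bd_integral (\<lambda>x. (norm (grad_bd Tp Ap Am x))\<^sup>2) a b c)
    \<le> K * diameter (tri a b c) powr (-1/2) * sqrt (integral (tri a b c) (\<lambda>x. (norm (grad_in Tp Ap Am x))\<^sup>2))"
proof (rule trace_inverse_estimate_tri[OF T shape _ _ _ _ _ _ K])
  let ?L = "max (jump_factor \<mu>p \<mu>m) (jump_factor \<mu>m \<mu>p)"
  have "jump_factor \<mu>p \<mu>m \<le> ?L" "jump_factor \<mu>m \<mu>p \<le> ?L" by simp_all
  then have "norm Ap \<le> ?L * norm Am" "norm Am \<le> ?L * norm Ap"
    using norm_ife_gradient_le[OF ife e \<mu>(1)] norm_ife_gradient_le[OF ife_swap[OF ife] e \<mu>(2)]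
    by (meson mult_right_mono norm_ge_zero order_trans)+
  then show "max ((norm Ap)\<^sup>2) ((norm Am)\<^sup>2) \<le> ?L\<^sup>2 * min ((norm Ap)\<^sup>2) ((norm Am)\<^sup>2)"
    by (intro max_power2_le_mult_min_power2) auto
  show "0 \<le> ?L" using \<mu> by (simp add: jump_factor_def le_max_iff_disj)
  show "\<forall>x. 0 \<le> (norm (grad_bd Tp Ap Am x))\<^sup>2
      \<and> (norm (grad_bd Tp Ap Am x))\<^sup>2 \<le> max ((norm Ap)\<^sup>2) ((norm Am)\<^sup>2)"
    by (simp add: grad_bd_def)
  show "0 \<le> min ((norm Ap)\<^sup>2) ((norm Am)\<^sup>2)" by simp
  show "\<forall>x\<in>tri a b c. min ((norm Ap)\<^sup>2) ((norm Am)\<^sup>2) \<le> (norm (grad_in Tp Ap Am x))\<^sup>2"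
    by (simp add: grad_in_def)
  show "(\<lambda>x. (norm (grad_in Tp Ap Am x))\<^sup>2) integrable_on tri a b c"
    unfolding grad_in_def if_distrib[of "\<lambda>A. (norm A)\<^sup>2"]
    using lmeasurable_open[OF bounded_tri open_tri] \<open>Tp \<in> sets lebesgue\<close>
    by (rule integrable_on_two_valued)
qed

theorem lemma5p2:
  fixes \<rho> \<mu>p \<mu>m :: real
  assumes "\<mu>p > 0" and "\<mu>m > 0"
  shows "\<exists>C>0. \<forall>a b c e1 e2 n Ap bp qp Am bm qm.
     \<not> collinear {a, b, c} \<and>
     diameter (tri a b c) \<le> \<rho> * inradius (tri a b c) \<and>
     e1 \<in> frontier (tri a b c) \<and> e2 \<in> frontier (tri a b c) \<and> e1 \<noteq> e2 \<and>
     open_segment e1 e2 \<subseteq> tri a b c \<and>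
     norm n = 1 \<and> n \<bullet> (e2 - e1) = 0 \<and>
     subplus (tri a b c) e1 n \<noteq> {} \<and> subminus (tri a b c) e1 n \<noteq> {} \<and>
     ife \<mu>p \<mu>m e1 e2 n Ap bp qp Am bm qm
     \<longrightarrow>
     sqrt (bd_integral (\<lambda>x. (norm (grad_bd (subplus (tri a b c) e1 n) Ap Am x))\<^sup>2) a b c)
       \<le> C * diameter (tri a b c) powr (-1/2) *
         sqrt (integral (tri a b c) (\<lambda>x. (norm (grad_in (subplus (tri a b c) e1 n) Ap Am x))\<^sup>2))"
proof -
  define L where "L = max (jump_factor \<mu>p \<mu>m) (jump_factor \<mu>m \<mu>p)"
  have "0 \<le> L" using assms by (simp add: L_def jump_factor_def le_max_iff_disj)
  define C where "C = 1 + 2 * \<bar>\<rho>\<bar> * L"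
  show ?thesis
  proof (intro exI[of _ C] conjI allI impI, goal_cases)
    case 1
    show ?case using \<open>0 \<le> L\<close> by (simp add: C_def add_pos_nonneg)
  next
    case (2 a b c e1 e2 n Ap bp qp Am bm qm)
    let ?Tp = "subplus (tri a b c) e1 n"
    have "?Tp = tri a b c \<inter> {x. n \<bullet> e1 < n \<bullet> x}"
      by (auto simp: subplus_def inner_diff_right)
    then have "open ?Tp" by (simp add: open_Int open_tri open_halfspace_gt)
    moreover have "tri a b c \<noteq> {}" using 2 by (auto simp: subplus_def)
    moreover have "2 * \<rho> * L \<le> C"
      using mult_right_mono[OF abs_ge_self \<open>0 \<le> L\<close>, of \<rho>] by (simp add: C_def mult.assoc)
    ultimately show ?case
      unfolding L_def using 2 assms by (intro ife_trace_inverse_estimate) auto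
  qed
qed

end
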